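(* Let $n\ge 2$, $A\in\mathbb{R}^{n\times n}$ and $C\in\mathbb{R}^{1\times n}$, with $(A,C)$ an observable pair and all eigenvalues of $A$ nonzero. Suppose the eigenvalues $\lambda_1,\ldots,\lambda_n$ of $A$ are pairwise distinct and satisfy $\lambda_1^n=\lambda_2^n=\cdots=\lambda_n^n$. Then, for a finite set $S$ of nonnegative integers, the matrix with rows $CA^{s}$, $s\in S$, has rank $n$ if and only if $S$ contains a subset of the form $$\{t,\ t+r_1n+1,\ t+r_2n+2,\ \ldots,\ t+r_{n-1}n+n-1\}$$ for some $t,r_1,\ldots,r_{n-1}\in\{0,1,2,\ldots\}$.
   Context: Setting: discrete-time single-output system $x(t+1)=Ax(t)+Bu(t)$, $y(t)=Cx(t)+Du(t)$ whose output is measured at the time instances in $S$ (a sampling scheme); the matrix with rows $CA^{s}$, $s\in S$, is the sample-based observability matrix, and rank $n$ means sample-based observability. $(A,C)$ observable means the matrix with rows $C,CA,\ldots,CA^{n-1}$ has rank $n$. *)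

theory Defs
  imports "HOL-Analysis.Analysis"
begin

text \<open>Matrix power (the ring structure on vec is pointwise, so we define it via matrix product).\<close>
fun matpow :: "'a::semiring_1 ^'n::finite^'n \<Rightarrow> nat \<Rightarrow> 'a^'n^'n" where
  "matpow A 0 = mat 1"
| "matpow A (Suc k) = A ** matpow A k"

definition cmat :: "real^'n::finite^'n \<Rightarrow> complex^'n^'n" where
  "cmat A = (\<chi> i j. complex_of_real (A $ i $ j))"

definition eigenvalues :: "real^'n::finite^'n \<Rightarrow> complex set" where
  "eigenvalues A = {c. \<exists>v::complex^'n. v \<noteq> 0 \<and> cmat A *v v = c *s v}"

definition sample_obs_rank :: "real^'n::finite^'n \<Rightarrow> real^'n \<Rightarrow> nat set \<Rightarrow> nat" where
  "sample_obs_rank A C S = dim (span ((\<lambda>s. C v* matpow A s) ` S))"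

definition observable :: "real^'n::finite^'n \<Rightarrow> real^'n \<Rightarrow> bool" where
  "observable A C \<longleftrightarrow> sample_obs_rank A C {0..<CARD('n)} = CARD('n)"

end

theory Submission
  imports Defs
begin

(* Distinct eigenvalues make A diagonalisable over the complex numbers, and since they all have
   the same n-th power c, A^n = c I with c real and nonzero.  Hence the row C A^s is a nonzero
   multiple of C A^(s mod n), and as the rows C A^r, r < n, are independent by observability,
   the rank of the sampled observability matrix is the number of residues mod n met by S.
   All n residues are met iff, with t the least element of S, every t + i (0 < i < n) is
   congruent to an element of S, which then has the form t + r n + i. *)

lemma matpow_add: "matpow A (a + b) = matpow A a ** matpow A b"
  by (induction a) (simp_all add: matrix_mul_assoc)

lemma matpow_eigenvector:
  fixes M :: "'a::comm_ring_1^'n^'n"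
  assumes "M *v v = l *s v"
  shows "matpow M k *v v = l ^ k *s v"
proof (induction k)
  case (Suc k)
  have "matpow M (Suc k) *v v = M *v (l ^ k *s v)"
    by (simp add: Suc flip: matrix_vector_mul_assoc)
  also have "\<dots> = l ^ k *s (M *v v)"
    by (simp add: vec_eq_iff matrix_vector_mult_def sum_distrib_left algebra_simps)
  also have "\<dots> = l ^ Suc k *s v"
    by (simp add: assms mult.commute)
  finally show ?case .
qed simp

lemma matrix_vector_mul_mat: "mat c *v x = c *s x"
  by (simp add: vec_eq_iff matrix_vector_mult_def mat_def if_distrib if_distribR cong: if_cong)

lemma independent_eigenvectors:
  fixes M :: "'a::field^'n^'n"
  assumes "finite V"
    and "\<And>v. v \<in> V \<Longrightarrow> v \<noteq> 0 \<and> M *v v = ev v *s v"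
    and "inj_on ev V"
  shows "vec.independent V"
  using assms
proof (induction V rule: finite_induct)
  case empty
  then show ?case by (simp add: vec.independent_empty)
next
  case (insert w V)
  have indep: "vec.independent V"
    using insert by (auto simp: inj_on_insert)
  have "w \<notin> vec.span V"
  proof
    assume "w \<in> vec.span V"
    then obtain u where u: "w = (\<Sum>v\<in>V. u v *s v)"
      using vec.span_finite[OF insert(1)] by auto
    have "M *v w = (\<Sum>v\<in>V. (u v * ev v) *s v)"
      unfolding u using insert(4)
      by (auto simp: vec.linear_sum vector_scalar_commute intro!: sum.cong)
    moreover have "M *v w = (\<Sum>v\<in>V. (u v * ev w) *s v)"
      using insert(4)[of w] by (simp add: u vec.scale_sum_right mult.commute)
    ultimately have "(\<Sum>v\<in>V. (u v * (ev v - ev w)) *s v) = 0"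
      by (simp add: algebra_simps vec.scale_left_diff_distrib sum_subtractf)
    then have "\<forall>v\<in>V. u v * (ev v - ev w) = 0"
      using indep[unfolded vec.independent_explicit, THEN conjunct2, rule_format,
          of "\<lambda>v. u v * (ev v - ev w)"]
      by simp
    moreover have "\<forall>v\<in>V. ev v \<noteq> ev w"
      using insert(2,5) by (auto simp: inj_on_def)
    ultimately have "w = 0"
      by (simp add: u)
    with insert(4) show False by auto
  qed
  then show ?case using indep by (rule vec.independent_insertI)
qed

lemma matpow_eq_mat_if_distinct_eigenvalues:
  fixes M :: "'a::field^'n^'n"
  assumes card: "card E = CARD('n)"
    and eigen: "\<And>l. l \<in> E \<Longrightarrow> \<exists>v. v \<noteq> 0 \<and> M *v v = l *s v"
    and pow: "\<And>l. l \<in> E \<Longrightarrow> l ^ k = c"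
  shows "matpow M k = mat c"
proof -
  obtain v where v: "\<And>l. l \<in> E \<Longrightarrow> v l \<noteq> 0 \<and> M *v v l = l *s v l"
    using eigen by metis
  have "finite E"
    using card card_gt_0_iff by fastforce
  have inj: "inj_on v E"
  proof (rule inj_onI)
    fix l m assume "l \<in> E" "m \<in> E" "v l = v m"
    then have "l *s v l = m *s v l" using v by metis
    with v[OF \<open>l \<in> E\<close>] show "l = m" by simp
  qed
  have "vec.independent (v ` E)"
  proof (rule independent_eigenvectors[where M = M])
    show "inj_on (inv_into E v) (v ` E)"
      by (rule inj_on_inv_into) simp
  qed (use \<open>finite E\<close> v inj in auto)
  moreover have "card (v ` E) = vec.dim (UNIV :: ('a^'n) set)"
    unfolding vec_dim_card using card card_image[OF inj] by simp
  ultimately have span: "vec.span (v ` E) = UNIV"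
    using vec.card_eq_dim[of "v ` E" UNIV] \<open>finite E\<close> by auto
  have "matpow M k *v x = mat c *v x" for x
  proof (rule vec.linear_eq_on_span[OF matrix_vector_mul_linear_gen matrix_vector_mul_linear_gen])
    fix w assume "w \<in> v ` E"
    then obtain l where "l \<in> E" "w = v l" by blast
    then show "matpow M k *v w = mat c *v w"
      using v[of l] pow[of l] matpow_eigenvector[of M "v l" l k] by (simp add: matrix_vector_mul_mat)
  qed (simp add: span)
  then show ?thesis
    by (simp add: matrix_eq)
qed

lemma cmat_mult: "cmat (X ** Y) = cmat X ** cmat Y"
  by (simp add: cmat_def matrix_matrix_mult_def vec_eq_iff)

lemma cmat_matpow: "cmat (matpow A k) = matpow (cmat A) k"
proof (induction k)
  case 0
  show ?case by (simp add: cmat_def mat_def vec_eq_iff)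
qed (simp add: cmat_mult)

lemma cmat_eq_matD:
  assumes "cmat B = mat z"
  shows "z \<in> \<real>" and "B = Re z *\<^sub>R mat 1"
proof -
  have entries: "complex_of_real (B $ i $ j) = (if i = j then z else 0)" for i j
    using assms by (simp add: cmat_def mat_def vec_eq_iff)
  from entries[of undefined undefined] show "z \<in> \<real>"
    by (metis Reals_of_real)
  have "B $ i $ j = (if i = j then Re z else 0)" for i j
    using arg_cong[OF entries[of i j], of Re] by simp
  then show "B = Re z *\<^sub>R mat 1"
    by (simp add: vec_eq_iff mat_def)
qed

lemma matpow_eq_scalar_if_eigenvalue_powers_eq:
  fixes A :: "real^'n::finite^'n"
  assumes "0 \<notin> eigenvalues A"
    and "card (eigenvalues A) = CARD('n)"
    and "\<forall>l\<in>eigenvalues A. \<forall>m\<in>eigenvalues A. l ^ k = m ^ k"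
  shows "\<exists>c. c \<noteq> 0 \<and> matpow A k = c *\<^sub>R mat 1"
proof -
  have "eigenvalues A \<noteq> {}"
    using assms(2) by auto
  then obtain l0 where l0: "l0 \<in> eigenvalues A" by blast
  have "matpow (cmat A) k = mat (l0 ^ k)"
  proof (rule matpow_eq_mat_if_distinct_eigenvalues[OF assms(2)])
    fix l assume "l \<in> eigenvalues A"
    then show "\<exists>v. v \<noteq> 0 \<and> cmat A *v v = l *s v"
      by (simp add: eigenvalues_def)
    show "l ^ k = l0 ^ k"
      using \<open>l \<in> eigenvalues A\<close> l0 assms(3) by blast
  qed
  then have real: "cmat (matpow A k) = mat (l0 ^ k)"
    by (simp add: cmat_matpow)
  moreover have "l0 ^ k \<noteq> 0"
    using l0 assms(1) by auto
  moreover have "l0 ^ k \<in> \<real>"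
    by (rule cmat_eq_matD(1)[OF real])
  ultimately have "Re (l0 ^ k) \<noteq> 0"
    by (metis of_real_0 of_real_Re)
  with cmat_eq_matD(2)[OF real] show ?thesis by blast
qed

lemma matpow_mult_add:
  fixes A :: "'a::real_algebra_1^'n^'n"
  assumes "matpow A n = c *\<^sub>R mat 1"
  shows "matpow A (q * n + r) = c ^ q *\<^sub>R matpow A r"
proof (induction q)
  case (Suc q)
  have "matpow A (Suc q * n + r) = matpow A n ** matpow A (q * n + r)"
    by (simp add: add.assoc matpow_add)
  also have "\<dots> = c ^ Suc q *\<^sub>R matpow A r"
    by (simp add: assms Suc matrix_scalar_ac flip: scalar_matrix_assoc)
  finally show ?case .
qed simp

lemma span_image_eq_if_nonzero_multiples:
  fixes f :: "'a \<Rightarrow> 'b::real_vector"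
  assumes "\<And>s. s \<in> S \<Longrightarrow> \<exists>a. a \<noteq> 0 \<and> f s = a *\<^sub>R f (h s)"
  shows "span (f ` S) = span (f ` h ` S)"
  unfolding span_eq
proof safe
  fix s assume "s \<in> S"
  with assms obtain a where "a \<noteq> 0" "f s = a *\<^sub>R f (h s)" by blast
  moreover have "f (h s) \<in> span (f ` h ` S)" and "f s \<in> span (f ` S)"
    using \<open>s \<in> S\<close> by (auto intro: span_base)
  ultimately show "f s \<in> span (f ` h ` S)" and "f (h s) \<in> span (f ` S)"
    by (auto intro: span_mul dest: span_mul[where c = "inverse a"])
qed

lemma dim_span_image_subset:
  fixes f :: "'a \<Rightarrow> 'b::euclidean_space"
  assumes "finite I" and "dim (span (f ` I)) = card I" and "J \<subseteq> I"
  shows "dim (span (f ` J)) = card J"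
proof -
  have "dim (span (f ` I)) \<le> card (f ` I)"
    using dim_le_card[OF span_superset finite_imageI[OF \<open>finite I\<close>]] by simp
  then have card: "card (f ` I) = card I"
    using assms(2) card_image_le[OF \<open>finite I\<close>, of f] by linarith
  then have "independent (f ` I)"
    using \<open>finite I\<close> assms(2) by (intro card_le_dim_spanning[of _ "span (f ` I)"]) (auto intro: span_base)
  then have "independent (f ` J)"
    using assms(3) by (meson image_mono independent_mono)
  moreover have "inj_on f J"
    using eq_card_imp_inj_on[OF \<open>finite I\<close> card] assms(3) by (rule inj_on_subset)
  ultimately show ?thesis
    by (simp add: dim_eq_card_independent card_image)
qed

lemma sample_obs_rank_eq_card_residues:
  fixes A :: "real^'n::finite^'n"
  assumes "observable A C" and "matpow A CARD('n) = c *\<^sub>R mat 1" and "c \<noteq> 0"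
  shows "sample_obs_rank A C S = card ((\<lambda>s. s mod CARD('n)) ` S)"
proof -
  define g where "g s = C v* matpow A s" for s
  have "span (g ` S) = span (g ` (\<lambda>s. s mod CARD('n)) ` S)"
  proof (rule span_image_eq_if_nonzero_multiples)
    fix s
    have "g s = c ^ (s div CARD('n)) *\<^sub>R g (s mod CARD('n))"
      using matpow_mult_add[OF assms(2), of "s div CARD('n)" "s mod CARD('n)"]
      by (simp add: g_def vector_scaleR_matrix_ac)
    moreover have "c ^ (s div CARD('n)) \<noteq> 0"
      using \<open>c \<noteq> 0\<close> by simp
    ultimately show "\<exists>a. a \<noteq> 0 \<and> g s = a *\<^sub>R g (s mod CARD('n))"
      by blast
  qed
  moreover have "dim (span (g ` {0..<CARD('n)})) = card {0..<CARD('n)}"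
    using assms(1) by (simp add: observable_def sample_obs_rank_def g_def)
  then have "dim (span (g ` (\<lambda>s. s mod CARD('n)) ` S)) = card ((\<lambda>s. s mod CARD('n)) ` S)"
    by (rule dim_span_image_subset[OF finite_atLeastLessThan]) auto
  ultimately show ?thesis
    by (simp add: sample_obs_rank_def g_def)
qed

lemma image_mod_shift_atLeastLessThan:
  fixes t n :: nat
  assumes "n > 0"
  shows "(\<lambda>i. (t + i) mod n) ` {0..<n} = {0..<n}"
proof (rule endo_inj_surj)
  show "inj_on (\<lambda>i. (t + i) mod n) {0..<n}"
  proof (rule inj_onI)
    fix i j assume "i \<in> {0..<n}" "j \<in> {0..<n}" and eq: "(t + i) mod n = (t + j) mod n"
    from eq have "i mod n = j mod n"
      unfolding nat_mod_eq_iff by simp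
    with \<open>i \<in> {0..<n}\<close> \<open>j \<in> {0..<n}\<close> show "i = j" by simp
  qed
qed (use assms in auto)

lemma image_mod_eq_atLeastLessThan_iff:
  fixes S :: "nat set" and n :: nat
  assumes "n > 0"
  shows "(\<lambda>s. s mod n) ` S = {0..<n} \<longleftrightarrow>
    (\<exists>t r. insert t ((\<lambda>i. t + r i * n + i) ` {1..<n}) \<subseteq> S)"
proof
  assume cover: "(\<lambda>s. s mod n) ` S = {0..<n}"
  then have "S \<noteq> {}"
    using assms by auto
  define t where "t = (LEAST s. s \<in> S)"
  have "t \<in> S" and least: "\<And>s. s \<in> S \<Longrightarrow> t \<le> s"
    using \<open>S \<noteq> {}\<close> by (auto simp: t_def intro: LeastI Least_le)
  have "\<exists>q. t + q * n + i \<in> S" if "i \<in> {1..<n}" for i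
  proof -
    have "(t + i) mod n \<in> (\<lambda>s. s mod n) ` S"
      using cover assms by simp
    then obtain s where "s \<in> S" and s_mod: "s mod n = (t + i) mod n"
      by auto
    then obtain d where s: "s = t + d"
      using least le_iff_add by blast
    from s_mod have "d mod n = i mod n"
      unfolding s nat_mod_eq_iff by simp
    with that have "d mod n = i"
      by simp
    then have "s = t + d div n * n + i"
      using div_mult_mod_eq[of d n] s by simp
    with \<open>s \<in> S\<close> show ?thesis by blast
  qed
  then obtain r where "\<And>i. i \<in> {1..<n} \<Longrightarrow> t + r i * n + i \<in> S"
    by metis
  with \<open>t \<in> S\<close> show "\<exists>t r. insert t ((\<lambda>i. t + r i * n + i) ` {1..<n}) \<subseteq> S"
    by blast
next
  assume "\<exists>t r. insert t ((\<lambda>i. t + r i * n + i) ` {1..<n}) \<subseteq> S"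
  then obtain t r where sub: "insert t ((\<lambda>i. t + r i * n + i) ` {1..<n}) \<subseteq> S"
    by blast
  have "(t + i) mod n \<in> (\<lambda>s. s mod n) ` S" if "i < n" for i
  proof (cases "i = 0")
    case True
    with sub show ?thesis by auto
  next
    case False
    with that sub have "t + r i * n + i \<in> S"
      by auto
    moreover have "(t + r i * n + i) mod n = (t + i) mod n"
      by (metis add.commute add.left_commute mod_mult_self1)
    ultimately show ?thesis
      by (metis image_eqI)
  qed
  then have "(\<lambda>i. (t + i) mod n) ` {0..<n} \<subseteq> (\<lambda>s. s mod n) ` S"
    by auto
  then have "{0..<n} \<subseteq> (\<lambda>s. s mod n) ` S"
    unfolding image_mod_shift_atLeastLessThan[OF assms] .
  moreover have "(\<lambda>s. s mod n) ` S \<subseteq> {0..<n}"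
    using assms by auto
  ultimately show "(\<lambda>s. s mod n) ` S = {0..<n}"
    by blast
qed

theorem lemma4:
  fixes A :: "real^'n::finite^'n" and C :: "real^'n" and S :: "nat set"
  assumes "CARD('n) \<ge> 2"
    and "observable A C"
    and "0 \<notin> eigenvalues A"
    and "card (eigenvalues A) = CARD('n)"
    and "\<forall>l\<in>eigenvalues A. \<forall>m\<in>eigenvalues A. l ^ CARD('n) = m ^ CARD('n)"
    and "finite S"
  shows "sample_obs_rank A C S = CARD('n) \<longleftrightarrow>
    (\<exists>(t::nat) (r::nat \<Rightarrow> nat).
       insert t ((\<lambda>i. t + r i * CARD('n) + i) ` {1..<CARD('n)}) \<subseteq> S)"
proof -
  obtain c where "c \<noteq> 0" and c: "matpow A CARD('n) = c *\<^sub>R mat 1"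
    using matpow_eq_scalar_if_eigenvalue_powers_eq[OF assms(3,4,5)] by blast
  have residues: "(\<lambda>s. s mod CARD('n)) ` S \<subseteq> {0..<CARD('n)}" (is "?R \<subseteq> _")
    by auto
  have "card ?R = CARD('n) \<longleftrightarrow> ?R = {0..<CARD('n)}"
  proof
    assume "card ?R = CARD('n)"
    then show "?R = {0..<CARD('n)}"
      using card_seteq[OF finite_atLeastLessThan residues] by simp
  qed simp
  then show ?thesis
    using sample_obs_rank_eq_card_residues[OF assms(2) c \<open>c \<noteq> 0\<close>]
      image_mod_eq_atLeastLessThan_iff[of "CARD('n)" S]
    by simp
qed

end
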